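(* Let $q$ be a prime power, $l\ge1$, $t=q^l$, and let $i$ be an integer with $1\le i<q-1$. Let $G_1(x)=x^{t-1}+1$, $G_2(x)=x^t+x$, and $L_1^*=\{\alpha\in GF(t^2):\ \alpha\neq0,\ G_1(\alpha)\ne0\}=\{\alpha_1,\dots,\alpha_{n}\}$. Let $H_1^{*(i)}$ be the $i(t-1)\times n$ matrix with entries $\alpha_k^s/G_1(\alpha_k)^i$ ($s=0,\dots,i(t-1)-1$, $k=1,\dots,n$). Then the matrix obtained by placing the row $\big(1/G_2(\alpha_1)^i,\dots,1/G_2(\alpha_n)^i\big)$ on top of $H_1^{*(i)}$ is a parity-check matrix of $\Gamma_2^{(i)}=\Gamma(L_1^*,G_2^i)$; that is, $\Gamma_2^{(i)}=\{c\in\Gamma_1^{*(i)}:\ \sum_{k}c_k/G_2(\alpha_k)^i=0\}$ where $\Gamma_1^{*(i)}=\Gamma(L_1^*,G_1^i)$, and the entries $1/G_2(\alpha_k)^i$ all lie in $GF(t)$.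
   Context: For a set $L=\{\alpha_1,\dots,\alpha_n\}$ of distinct elements of $GF(t^2)$ and $P\in GF(t^2)[x]$ with $P(\alpha_k)\neq0$ for all $k$, the $q$-ary Goppa code is $\Gamma(L,P)=\{c\in GF(q)^n:\ \sum_k c_k\alpha_k^s/P(\alpha_k)=0 \text{ for } s=0,\dots,\deg P-1\}$. A matrix $H$ over $GF(t^2)$ is a parity-check matrix of a $q$-ary code $C$ if $C=\{c\in GF(q)^n: cH^T=0\}$. *)

theory Defs
  imports "HOL-Computational_Algebra.Polynomial" "HOL-Computational_Algebra.Primes"
begin

definition subfield_GF :: "nat \<Rightarrow> 'a::field set" where
  "subfield_GF r = {x. x ^ r = x}"

definition words :: "nat \<Rightarrow> nat \<Rightarrow> (nat \<Rightarrow> 'a::field) set" where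
  "words q n = {c. (\<forall>k<n. c k \<in> subfield_GF q) \<and> (\<forall>k\<ge>n. c k = 0)}"

definition goppa_code :: "nat \<Rightarrow> (nat \<Rightarrow> 'a::field) \<Rightarrow> nat \<Rightarrow> 'a poly \<Rightarrow> (nat \<Rightarrow> 'a) set" where
  "goppa_code q alpha n P = {c \<in> words q n.
     \<forall>s<degree P. (\<Sum>k<n. c k * alpha k ^ s / poly P (alpha k)) = 0}"

definition is_parity_check :: "nat \<Rightarrow> nat \<Rightarrow> nat \<Rightarrow> (nat \<Rightarrow> nat \<Rightarrow> 'a::field) \<Rightarrow> (nat \<Rightarrow> 'a) set \<Rightarrow> bool" where
  "is_parity_check q m n H C \<longleftrightarrow> C = {c \<in> words q n. \<forall>r<m. (\<Sum>k<n. c k * H r k) = 0}"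

end

theory Submission
  imports Defs
begin

text \<open>Since \<open>G\<^sub>2(x) = x G\<^sub>1(x)\<close>, the \<open>s\<close>-th syndrome of \<open>G\<^sub>2\<^sup>i\<close> with \<open>s \<ge> i\<close> is the
  \<open>(s - i)\<close>-th syndrome of \<open>G\<^sub>1\<^sup>i\<close>. The values \<open>G\<^sub>2(x) = x\<^sup>t + x\<close> lie in \<open>GF(t)\<close>
  because \<open>x^(t^2) = x\<close>, and the code letters lie in \<open>GF(q) \<subseteq> GF(t)\<close>, so the Frobenius
  \<open>y \<mapsto> y\<^sup>t\<close> maps the \<open>s\<close>-th syndrome of \<open>G\<^sub>2\<^sup>i\<close> to its \<open>st\<close>-th one, i.e.\ to the
  \<open>(st - i)\<close>-th syndrome of \<open>G\<^sub>1\<^sup>i\<close>; for \<open>0 < s < i\<close> this index is below \<open>i(t - 1)\<close>.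
  Hence, among the \<open>it\<close> checks of \<open>\<Gamma>(L, G\<^sub>2\<^sup>i)\<close>, only the one for \<open>s = 0\<close> is not
  already a check of \<open>\<Gamma>(L, G\<^sub>1\<^sup>i)\<close>.\<close>

lemma finite_field_power_card_eq_self:
  fixes x :: "'a::{field,finite}"
  shows "x ^ card (UNIV :: 'a set) = x"
proof (cases "x = 0")
  case True
  then show ?thesis by (simp add: finite_UNIV_card_ge_0)
next
  case False
  define U where "U = (UNIV :: 'a set) - {0}"
  have card_U: "card U = card (UNIV :: 'a set) - 1"
    unfolding U_def by (simp add: card_Diff_singleton)
  have "(\<Prod>y\<in>U. x * y) = (\<Prod>y\<in>U. y)"
    by (rule prod.reindex_bij_witness[of _ "\<lambda>y. y / x" "\<lambda>y. x * y"]) (use False in \<open>auto simp: U_def\<close>)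
  then have "x ^ (card (UNIV :: 'a set) - 1) * (\<Prod>y\<in>U. y) = 1 * (\<Prod>y\<in>U. y)"
    by (simp add: prod.distrib card_U)
  moreover have "(\<Prod>y\<in>U. y) \<noteq> 0"
    unfolding U_def by simp
  ultimately have "x ^ (card (UNIV :: 'a set) - 1) = 1"
    by (rule mult_right_cancel[THEN iffD1, rotated])
  then have "x ^ Suc (card (UNIV :: 'a set) - 1) = x"
    by simp
  then show ?thesis
    using finite_UNIV_card_ge_0[where 'a='a] by simp
qed

lemma CHAR_eq_of_card_prime_power:
  assumes "prime p" and "card (UNIV :: 'a::{field,finite} set) = p ^ m"
  shows "CHAR('a) = p"
proof -
  have "prime CHAR('a)"
    by (rule prime_CHAR_semidom) (simp add: finite_imp_CHAR_pos)
  moreover have "CHAR('a) dvd p ^ m"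
  proof -
    have "(\<Sum>x\<in>UNIV. x + 1) = (\<Sum>x\<in>(UNIV :: 'a set). x)"
      by (rule sum.reindex_bij_witness[of _ "\<lambda>y. y - 1" "\<lambda>y. y + 1"]) auto
    then have "of_nat (p ^ m) = (0 :: 'a)"
      by (simp add: sum.distrib assms(2))
    then show ?thesis
      using of_nat_eq_0_iff_char_dvd by blast
  qed
  ultimately show ?thesis
    using assms(1) prime_dvd_power primes_dvd_imp_eq by blast
qed

lemma subfield_GF_subset_power: "subfield_GF q \<subseteq> subfield_GF (q ^ l)"
proof
  fix x :: 'a assume x: "x \<in> subfield_GF q"
  have "x ^ (q ^ l) = x"
  proof (induction l)
    case (Suc l)
    have "x ^ (q ^ Suc l) = (x ^ q ^ l) ^ q"
      by (metis power_Suc2 power_mult)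
    then show ?case
      using Suc x by (simp add: subfield_GF_def)
  qed simp
  then show "x \<in> subfield_GF (q ^ l)"
    by (simp add: subfield_GF_def)
qed

lemma inverse_power_in_subfield_GF:
  assumes "x \<in> subfield_GF r"
  shows "1 / x ^ i \<in> subfield_GF r"
proof -
  have "(x ^ i) ^ r = (x ^ r) ^ i"
    by (simp add: mult.commute flip: power_mult)
  then show ?thesis
    using assms by (simp add: subfield_GF_def power_divide)
qed

lemma power_plus_self_in_subfield_GF:
  fixes x :: "'a::field"
  assumes "prime CHAR('a)" and "t = CHAR('a) ^ m" and "x ^ (t * t) = x"
  shows "x ^ t + x \<in> subfield_GF t"
  using assms by (simp add: subfield_GF_def freshmans_dream' add.commute flip: power_mult)

definition goppa_syndrome :: "'b set \<Rightarrow> ('b \<Rightarrow> 'a) \<Rightarrow> ('b \<Rightarrow> 'a) \<Rightarrow> ('b \<Rightarrow> 'a) \<Rightarrow> nat \<Rightarrow> 'a::field"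
  where "goppa_syndrome K c a d s = (\<Sum>k\<in>K. c k * a k ^ s / d k)"

lemma goppa_code_eq_syndromes:
  "goppa_code q alpha n P =
     {c \<in> words q n. \<forall>s<degree P. goppa_syndrome {..<n} c alpha (\<lambda>k. poly P (alpha k)) s = 0}"
  by (simp add: goppa_code_def goppa_syndrome_def)

lemma goppa_syndrome_shift:
  assumes "\<forall>k\<in>K. a k \<noteq> 0"
  shows "goppa_syndrome K c a (\<lambda>k. (a k * g k) ^ i) (s + i) = goppa_syndrome K c a (\<lambda>k. g k ^ i) s"
  unfolding goppa_syndrome_def
  by (rule sum.cong) (use assms in \<open>auto simp: power_add power_mult_distrib\<close>)

lemma goppa_syndrome_frobenius:
  fixes c a g :: "'b \<Rightarrow> 'a::field"
  assumes "prime CHAR('a)" and "t = CHAR('a) ^ m" and "i \<le> s * t"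
    and "\<forall>k\<in>K. a k \<noteq> 0" and "\<forall>k\<in>K. c k ^ t = c k" and "\<forall>k\<in>K. (a k * g k) ^ t = a k * g k"
  shows "goppa_syndrome K c a (\<lambda>k. (a k * g k) ^ i) s ^ t
           = goppa_syndrome K c a (\<lambda>k. g k ^ i) (s * t - i)"
proof -
  have "goppa_syndrome K c a (\<lambda>k. (a k * g k) ^ i) s ^ t
          = goppa_syndrome K c a (\<lambda>k. (a k * g k) ^ i) (s * t - i + i)"
    unfolding goppa_syndrome_def freshmans_dream_sum'[OF assms(1,2)]
  proof (rule sum.cong)
    fix k assume "k \<in> K"
    have "((a k * g k) ^ i) ^ t = ((a k * g k) ^ t) ^ i"
      by (simp only: mult.commute flip: power_mult)
    then have "((a k * g k) ^ i) ^ t = (a k * g k) ^ i" and "c k ^ t = c k"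
      using assms(5,6) \<open>k \<in> K\<close> by simp_all
    moreover have "s * t - i + i = s * t"
      using assms(3) by simp
    ultimately show "(c k * a k ^ s / (a k * g k) ^ i) ^ t = c k * a k ^ (s * t - i + i) / (a k * g k) ^ i"
      by (simp add: power_divide power_mult_distrib power_mult)
  qed simp
  also have "\<dots> = goppa_syndrome K c a (\<lambda>k. g k ^ i) (s * t - i)"
    by (rule goppa_syndrome_shift[OF assms(4)])
  finally show ?thesis .
qed

lemma frobenius_index_bound:
  fixes s i t :: nat
  assumes "0 < s" and "s < i" and "i < t"
  shows "s * t - i < i * (t - 1)"
proof -
  have "s * t \<le> (i - 1) * t"
    using assms(2) by (intro mult_le_mono1) simp
  moreover have "(i - 1) * t + t = i * t" and "i * (t - 1) + i = i * t"
    using assms by (auto simp: algebra_simps)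
  ultimately show ?thesis
    using assms by linarith
qed

lemma goppa_syndromes_mult_denominator_iff:
  fixes c a g :: "'b \<Rightarrow> 'a::field"
  assumes "prime CHAR('a)" and "t = CHAR('a) ^ m" and "0 < i" and "i < t"
    and "\<forall>k\<in>K. a k \<noteq> 0" and "\<forall>k\<in>K. c k ^ t = c k" and "\<forall>k\<in>K. (a k * g k) ^ t = a k * g k"
  defines "S \<equiv> goppa_syndrome K c a (\<lambda>k. (a k * g k) ^ i)"
    and "T \<equiv> goppa_syndrome K c a (\<lambda>k. g k ^ i)"
  shows "(\<forall>s<i * t. S s = 0) \<longleftrightarrow>
           (\<Sum>k\<in>K. c k / (a k * g k) ^ i) = 0 \<and> (\<forall>s<i * (t - 1). T s = 0)"
proof -
  have S_0: "S 0 = (\<Sum>k\<in>K. c k / (a k * g k) ^ i)"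
    by (simp add: S_def goppa_syndrome_def)
  have it: "i * t = i * (t - 1) + i"
    using assms(4) by (cases t) auto
  have shift: "S (s + i) = T s" for s
    unfolding S_def T_def using goppa_syndrome_shift[OF assms(5)] .
  have frob: "S s ^ t = T (s * t - i)" if "0 < s" for s
  proof -
    have "i \<le> s * t"
      using that assms(4) by (simp add: order.strict_implies_order order.trans[OF _ mult_le_mono1[of 1 s t]])
    then show ?thesis
      unfolding S_def T_def by (rule goppa_syndrome_frobenius[OF assms(1,2) _ assms(5-7)])
  qed
  show ?thesis
  proof
    assume S: "\<forall>s<i * t. S s = 0"
    have "S 0 = 0"
      using S assms(3,4) by simp
    moreover have "T s = 0" if "s < i * (t - 1)" for s
      using S shift[of s] that it by simp
    ultimately show "(\<Sum>k\<in>K. c k / (a k * g k) ^ i) = 0 \<and> (\<forall>s<i * (t - 1). T s = 0)"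
      by (simp add: S_0)
  next
    assume "(\<Sum>k\<in>K. c k / (a k * g k) ^ i) = 0 \<and> (\<forall>s<i * (t - 1). T s = 0)"
    then have ST: "S 0 = 0 \<and> (\<forall>s<i * (t - 1). T s = 0)"
      by (simp add: S_0)
    show "\<forall>s<i * t. S s = 0"
    proof (intro allI impI)
      fix s assume "s < i * t"
      consider "s = 0" | "0 < s" "s < i" | "i \<le> s"
        by linarith
      then show "S s = 0"
      proof cases
        case 1
        then show ?thesis using ST by simp
      next
        case 2
        then have "S s ^ t = 0"
          using ST frob frobenius_index_bound assms(4) by simp
        then show ?thesis
          by simp
      next
        case 3
        then have "s = (s - i) + i" and "s - i < i * (t - 1)"
          using \<open>s < i * t\<close> it by linarith+
        then show ?thesis
          using ST shift by metis
      qed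
    qed
  qed
qed

lemma goppa_code_pCons_0_power:
  fixes G :: "'a::field poly"
  assumes "prime CHAR('a)" and "t = CHAR('a) ^ m" and "0 < i" and "i < t" and "degree G = t - 1"
    and "subfield_GF q \<subseteq> (subfield_GF t :: 'a set)" and "\<forall>k<n. alpha k \<noteq> 0"
    and "\<forall>k<n. poly (pCons 0 G) (alpha k) \<in> subfield_GF t"
  shows "goppa_code q alpha n (pCons 0 G ^ i) =
           {c \<in> goppa_code q alpha n (G ^ i). (\<Sum>k<n. c k / poly (pCons 0 G) (alpha k) ^ i) = 0}"
proof -
  have "G \<noteq> 0"
    using assms(3-5) by auto
  then have deg: "degree (G ^ i) = i * (t - 1)" "degree (pCons 0 G ^ i) = i * t"
    using assms(3-5) by (simp_all add: degree_power_eq)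
  have poly_pCons_0: "poly (pCons 0 G) x = x * poly G x" for x
    by simp
  have "(\<forall>s<i * t. goppa_syndrome {..<n} c alpha (\<lambda>k. poly (pCons 0 G ^ i) (alpha k)) s = 0) \<longleftrightarrow>
       (\<Sum>k<n. c k / poly (pCons 0 G) (alpha k) ^ i) = 0 \<and>
       (\<forall>s<i * (t - 1). goppa_syndrome {..<n} c alpha (\<lambda>k. poly (G ^ i) (alpha k)) s = 0)"
    if "c \<in> words q n" for c
    unfolding poly_power poly_pCons_0
  proof (rule goppa_syndromes_mult_denominator_iff[OF assms(1-4)])
    show "\<forall>k\<in>{..<n}. c k ^ t = c k"
    proof
      fix k assume "k \<in> {..<n}"
      then have "c k \<in> subfield_GF q"
        using that by (simp add: words_def)
      then have "c k \<in> subfield_GF t"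
        by (rule subsetD[OF assms(6)])
      then show "c k ^ t = c k"
        by (simp add: subfield_GF_def)
    qed
    show "\<forall>k\<in>{..<n}. (alpha k * poly G (alpha k)) ^ t = alpha k * poly G (alpha k)"
      using assms(8) by (simp add: subfield_GF_def)
  qed (use assms(7) in simp)
  then show ?thesis
    unfolding goppa_code_eq_syndromes deg by auto
qed

lemma goppa_code_parity_check:
  "is_parity_check q (degree P) n (\<lambda>s k. alpha k ^ s / poly P (alpha k)) (goppa_code q alpha n P)"
  by (simp add: is_parity_check_def goppa_code_def)

lemma is_parity_check_add_row:
  assumes "is_parity_check q m n (\<lambda>r. H (Suc r)) C"
  shows "is_parity_check q (m + 1) n H {c \<in> C. (\<Sum>k<n. c k * H 0 k) = 0}"
  using assms by (auto simp: is_parity_check_def less_Suc_eq_0_disj)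

theorem lemma4:
  fixes p e q l t i n :: nat and alpha :: "nat \<Rightarrow> 'a::{field,finite}"
  assumes "prime p" and "e \<ge> 1" and "q = p ^ e"
    and "l \<ge> 1" and "t = q ^ l"
    and "card (UNIV :: 'a set) = t ^ 2"
    and "1 \<le> i" and "i < q - 1"
  defines "G1 \<equiv> monom (1::'a) (t - 1) + 1"
    and "G2 \<equiv> monom (1::'a) t + monom 1 1"
  assumes "bij_betw alpha {..<n} {a. a \<noteq> 0 \<and> poly G1 a \<noteq> 0}"
  defines "H \<equiv> (\<lambda>r k. if r = 0 then 1 / poly G2 (alpha k) ^ i
                       else alpha k ^ (r - 1) / poly G1 (alpha k) ^ i)"
  shows "is_parity_check q (i * (t - 1) + 1) n H (goppa_code q alpha n (G2 ^ i))
     \<and> goppa_code q alpha n (G2 ^ i) =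
         {c \<in> goppa_code q alpha n (G1 ^ i). (\<Sum>k<n. c k / poly G2 (alpha k) ^ i) = 0}
     \<and> (\<forall>k<n. 1 / poly G2 (alpha k) ^ i \<in> subfield_GF t)"
proof -
  have t_pow: "t = p ^ (e * l)"
    using assms(3,5) by (simp add: power_mult)
  have CHAR: "CHAR('a) = p"
    using assms(6) t_pow by (intro CHAR_eq_of_card_prime_power[OF assms(1), of "e * l * 2"]) (simp add: power_mult)
  then have t_CHAR: "t = CHAR('a) ^ (e * l)"
    using t_pow by simp
  have "q \<le> t"
    using assms(4,5,7,8) by (simp add: self_le_power)
  then have "i < t" and "2 \<le> t"
    using assms(7,8) by linarith+
  have G2_pCons: "G2 = pCons 0 G1"
    using \<open>2 \<le> t\<close> by (cases t) (simp_all add: G1_def G2_def monom_Suc)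
  have G2_GF: "poly G2 x \<in> subfield_GF t" for x
  proof -
    have "x ^ (t * t) = x"
      using finite_field_power_card_eq_self[of x] assms(6) by (simp add: power2_eq_square)
    then show ?thesis
      using assms(1) CHAR t_CHAR by (simp add: G2_def poly_monom power_plus_self_in_subfield_GF)
  qed
  have deg_G1: "degree G1 = t - 1"
    using \<open>2 \<le> t\<close> unfolding G1_def by (simp add: degree_add_eq_left degree_monom_eq)
  then have "G1 \<noteq> 0"
    using \<open>2 \<le> t\<close> by auto
  have alpha_nonzero: "\<forall>k<n. alpha k \<noteq> 0"
    using assms(11) by (auto simp: bij_betw_def)
  have G2_code: "goppa_code q alpha n (G2 ^ i) =
      {c \<in> goppa_code q alpha n (G1 ^ i). (\<Sum>k<n. c k / poly G2 (alpha k) ^ i) = 0}"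
    unfolding G2_pCons
    by (rule goppa_code_pCons_0_power[OF _ t_CHAR _ \<open>i < t\<close> deg_G1 _ alpha_nonzero])
      (use assms(1,5,7) CHAR subfield_GF_subset_power[of q l] G2_GF in \<open>simp_all flip: G2_pCons\<close>)
  have "is_parity_check q (i * (t - 1) + 1) n H (goppa_code q alpha n (G2 ^ i))"
    unfolding G2_code
    using is_parity_check_add_row[of q "i * (t - 1)" n H] goppa_code_parity_check[of q "G1 ^ i" n alpha] deg_G1 \<open>G1 \<noteq> 0\<close> by (simp add: H_def poly_power degree_power_eq)
  then show ?thesis
    using G2_code G2_GF inverse_power_in_subfield_GF by blast
qed

end
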